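(* Let $g_0,g_\infty\in\mathbb C$, $g_1=-g_0-g_\infty$, and let $G(t,z)$ be the EGF of the GKP triangle $\left[\begin{array}{cc|c}-\tfrac12,&1&g_0\\ 1,&-1&g_\infty\end{array}\right]$ (the case $(r_0,r_1,r_\infty)=(\tfrac12,\tfrac12,0)$). Put $t_+=t$, $t_-=1-t$ and $$s_\pm=\Bigl[\sqrt{t_\pm}\cos\Bigl(\tfrac z2\sqrt{t_+t_-}\Bigr)\pm\sqrt{t_\mp}\sin\Bigl(\tfrac z2\sqrt{t_+t_-}\Bigr)\Bigr]^2 .$$ Then $s_++s_-=1$, the quotients $s_+/t_+$ and $s_-/t_-$ (after expanding the squares) are analytic at $(0,0)$ and equal $1$ at $z=0$, and near $(0,0)$ $$G(t,z)=\Bigl(\frac{s_+}{t_+}\Bigr)^{g_0}\Bigl(\frac{s_-}{t_-}\Bigr)^{g_1}$$ with principal branches.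
   Context: GKP triangle: for complex parameters $\alpha,\beta,\gamma,\alpha',\beta',\gamma'$, the array $T_{n,k}=\left[\begin{array}{cc|c}\alpha,&\beta&\gamma\\ \alpha',&\beta'&\gamma'\end{array}\right]_{n,k}$ is defined by $T_{0,0}=1$, $T_{n,k}=0$ if $n<0$, $k<0$ or $k>n$, and $T_{n+1,k+1}=[\alpha n+\beta(k+1)+\gamma]T_{n,k+1}+[\alpha' n+\beta' k+\gamma']T_{n,k}$ for $n\ge0$, $k\in\mathbb Z$; its EGF is $G(t,z)=\sum_{n\ge0}\sum_{k=0}^nT_{n,k}t^kz^n/n!$. *)

theory Defs
  imports "HOL-Analysis.Analysis"
begin

text \<open>GKP triangle [alpha, beta | gamma ; alpha', beta' | gamma'], indexed by n, k :: nat.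
  Entries with k < 0 vanish, so the case k+1 = 0 of the recurrence reduces to the
  first term only.\<close>
fun gkp :: "complex \<Rightarrow> complex \<Rightarrow> complex \<Rightarrow> complex \<Rightarrow> complex \<Rightarrow> complex \<Rightarrow> nat \<Rightarrow> nat \<Rightarrow> complex" where
  "gkp a b c a' b' c' 0 k = (if k = 0 then 1 else 0)"
| "gkp a b c a' b' c' (Suc n) 0 = (a * of_nat n + c) * gkp a b c a' b' c' n 0"
| "gkp a b c a' b' c' (Suc n) (Suc k) =
     (a * of_nat n + b * of_nat (Suc k) + c) * gkp a b c a' b' c' n (Suc k)
   + (a' * of_nat n + b' * of_nat k + c') * gkp a b c a' b' c' n k"

definition analytic2_at :: "(complex \<Rightarrow> complex \<Rightarrow> complex) \<Rightarrow> complex \<Rightarrow> complex \<Rightarrow> bool" where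
  "analytic2_at f a b \<longleftrightarrow> (\<exists>r>0. \<exists>c :: nat \<Rightarrow> nat \<Rightarrow> complex. \<forall>t z.
      cmod (t - a) < r \<and> cmod (z - b) < r \<longrightarrow>
      ((\<lambda>(n, k). c n k * (t - a) ^ k * (z - b) ^ n) has_sum f t z) UNIV)"

text \<open>w = (z/2) sqrt(t_+ t_-), with sqrt(t_+ t_-) := sqrt(t_+) sqrt(t_-) (consistent branches).\<close>
definition gkp_w :: "complex \<Rightarrow> complex \<Rightarrow> complex" where
  "gkp_w t z = z / 2 * (csqrt t * csqrt (1 - t))"

definition s_plus :: "complex \<Rightarrow> complex \<Rightarrow> complex" where
  "s_plus t z = (csqrt t * cos (gkp_w t z) + csqrt (1 - t) * sin (gkp_w t z)) ^ 2"

definition s_minus :: "complex \<Rightarrow> complex \<Rightarrow> complex" where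
  "s_minus t z = (csqrt (1 - t) * cos (gkp_w t z) - csqrt t * sin (gkp_w t z)) ^ 2"

end

theory Submission
  imports Defs
begin

text \<open>
  View \<open>G\<close> and \<open>A = \<surd>(s\<^sub>+/t\<^sub>+)\<close>, \<open>B = \<surd>(s\<^sub>-/t\<^sub>-)\<close> as power series in \<open>z\<close> whose
  coefficients are polynomials in \<open>t\<close>. The triangle recurrence says exactly that \<open>G\<close> is an
  eigenfunction of the first-order operator \<open>D = (1 + (1/2 - t) z) \<partial>\<^sub>z - t (1 - t) \<partial>\<^sub>t\<close>,
  with eigenvalue \<open>g\<^sub>0 + g\<^sub>\<infinity> t\<close>, and \<open>A\<close>, \<open>B\<close> are eigenfunctions with eigenvalues
  \<open>(1 - t)/2\<close> and \<open>-t/2\<close>. As \<open>D\<close> is a derivation, \<open>A B G' - (2 g\<^sub>0 A' B + 2 g\<^sub>1 A B') G\<close>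
  (with \<open>'\<close> = \<open>\<partial>\<^sub>z\<close>) is again an eigenfunction; its constant term vanishes because
  \<open>g\<^sub>0 + g\<^sub>1 + g\<^sub>\<infinity> = 0\<close>, and an eigenfunction of \<open>D\<close> with zero constant term is zero.
  For fixed small \<open>t\<close> this is a linear ODE in \<open>z\<close>, whose solution with \<open>G(t, 0) = 1\<close> is
  \<open>(A\<^sup>2)\<^sup>g\<^sup>0 (B\<^sup>2)\<^sup>g\<^sup>1\<close>; near the origin \<open>A\<close> and \<open>B\<close> have positive real part, so the
  principal branches are the right ones. Convergence of the double series near \<open>(0, 0)\<close>
  comes from geometric bounds on the \<open>\<ell>\<^sup>1\<close>-norms of the polynomial coefficients.
\<close>

definition coeff_norm :: "complex poly \<Rightarrow> real" where
  "coeff_norm p = (\<Sum>k\<le>degree p. cmod (coeff p k))"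

lemma coeff_norm_eq_sum_atMost:
  "degree p \<le> N \<Longrightarrow> coeff_norm p = (\<Sum>k\<le>N. cmod (coeff p k))"
  unfolding coeff_norm_def by (rule sum.mono_neutral_left) (auto simp: coeff_eq_0)

lemma coeff_norm_nonneg: "coeff_norm p \<ge> 0"
  unfolding coeff_norm_def by (auto intro: sum_nonneg)

lemma coeff_norm_1 [simp]: "coeff_norm 1 = 1"
  by (simp add: coeff_norm_def)

lemma coeff_norm_pCons_pCons: "coeff_norm [:a, b:] \<le> cmod a + cmod b"
  by (subst coeff_norm_eq_sum_atMost[of _ 1]) auto

lemma coeff_norm_add: "coeff_norm (p + q) \<le> coeff_norm p + coeff_norm q"
proof -
  let ?N = "max (degree p) (degree q)"
  have "coeff_norm (p + q) = (\<Sum>k\<le>?N. cmod (coeff p k + coeff q k))"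
    by (simp add: coeff_norm_eq_sum_atMost[of "p + q" ?N, OF degree_add_le_max])
  also have "\<dots> \<le> (\<Sum>k\<le>?N. cmod (coeff p k) + cmod (coeff q k))"
    by (intro sum_mono norm_triangle_ineq)
  also have "\<dots> = coeff_norm p + coeff_norm q"
    by (simp add: sum.distrib coeff_norm_eq_sum_atMost[of p ?N] coeff_norm_eq_sum_atMost[of q ?N])
  finally show ?thesis .
qed

lemma coeff_norm_sum: "coeff_norm (sum f A) \<le> (\<Sum>x\<in>A. coeff_norm (f x))"
proof (induction A rule: infinite_finite_induct)
  case (insert x F)
  then show ?case using coeff_norm_add[of "f x" "sum f F"] by simp
qed (simp_all add: coeff_norm_def)

lemma coeff_norm_smult: "coeff_norm (smult c p) = cmod c * coeff_norm p"
  by (subst coeff_norm_eq_sum_atMost[of _ "degree p"])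
     (simp_all add: coeff_norm_def norm_mult sum_distrib_left)

lemma coeff_norm_eq_poly_map_cmod: "coeff_norm p = poly (map_poly cmod p) 1"
  by (subst poly_altdef, subst sum.mono_neutral_left[of "{..degree p}"])
     (auto simp: coeff_norm_def coeff_map_poly map_poly_degree_leq coeff_eq_0)

lemma coeff_norm_mult: "coeff_norm (p * q) \<le> coeff_norm p * coeff_norm q"
proof -
  let ?r = "map_poly cmod p * map_poly cmod q"
  have coeff_r_nonneg: "coeff ?r k \<ge> 0" for k
    by (auto simp: coeff_mult coeff_map_poly intro: sum_nonneg)
  have "coeff_norm (p * q) \<le> (\<Sum>k\<le>degree (p * q). coeff ?r k)"
    unfolding coeff_norm_def coeff_mult
    by (intro sum_mono order_trans[OF norm_sum]) (simp add: norm_mult coeff_map_poly)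
  also have "\<dots> \<le> (\<Sum>k\<le>max (degree (p * q)) (degree ?r). coeff ?r k)"
    by (rule sum_mono2) (auto simp: coeff_r_nonneg)
  also have "\<dots> = poly ?r 1"
    by (subst poly_altdef, subst sum.mono_neutral_left[of "{..max (degree (p * q)) (degree ?r)}"])
       (auto simp: coeff_eq_0)
  also have "\<dots> = coeff_norm p * coeff_norm q"
    by (simp add: coeff_norm_eq_poly_map_cmod)
  finally show ?thesis .
qed

lemma coeff_norm_power: "coeff_norm (p ^ n) \<le> coeff_norm p ^ n"
  by (induction n)
     (auto intro!: order_trans[OF coeff_norm_mult] mult_left_mono coeff_norm_nonneg)

lemma coeff_norm_pderiv: "coeff_norm (pderiv p) \<le> of_nat (degree p) * coeff_norm p"
proof -
  have "coeff_norm (pderiv p) = (\<Sum>k\<le>degree p. cmod (coeff (pderiv p) k))"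
    by (rule coeff_norm_eq_sum_atMost) (simp add: degree_pderiv)
  also have "\<dots> \<le> (\<Sum>k\<le>degree p. of_nat (degree p) * cmod (coeff p (Suc k)))"
  proof (intro sum_mono)
    fix k
    show "cmod (coeff (pderiv p) k) \<le> of_nat (degree p) * cmod (coeff p (Suc k))"
      by (cases "Suc k \<le> degree p")
         (auto simp: coeff_pderiv coeff_eq_0 norm_mult simp del: of_nat_Suc intro!: mult_right_mono)
  qed
  also have "\<dots> \<le> of_nat (degree p) * (\<Sum>k\<le>Suc (degree p). cmod (coeff p k))"
    by (simp add: sum_distrib_left[symmetric] sum.atMost_Suc_shift mult_left_mono del: sum.atMost_Suc)
  also have "\<dots> = of_nat (degree p) * coeff_norm p"
    by (subst coeff_norm_eq_sum_atMost[of p "Suc (degree p)"]) simp_all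
  finally show ?thesis .
qed

lemma norm_poly_le_coeff_norm: "cmod t \<le> 1 \<Longrightarrow> cmod (poly p t) \<le> coeff_norm p"
  unfolding poly_altdef coeff_norm_def
  by (rule order_trans[OF norm_sum], rule sum_mono)
     (auto simp: norm_mult norm_power intro!: mult_left_le power_le_one)

lemma poly_ext: "(\<And>x. poly p x = poly q x) \<Longrightarrow> p = (q :: complex poly)"
  by (rule poly_eq_poly_eq_iff[THEN iffD1]) blast

text \<open>\<open>tpm\<close> is \<open>t\<^sub>+ t\<^sub>- = t (1 - t)\<close>.\<close>

definition tpm :: "complex poly" where
  "tpm = [:0, 1, -1:]"

lemma poly_tpm: "poly tpm x = x - x\<^sup>2"
  by (simp add: tpm_def power2_eq_square algebra_simps)

lemma pderiv_tpm: "pderiv tpm = [:1, -2:]"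
  by (simp add: tpm_def pderiv_pCons)

lemma coeff_tpm_mult:
  "coeff (tpm * p) 0 = 0" "coeff (tpm * p) (Suc j) = coeff p j - coeff (pCons 0 p) j"
proof -
  have "tpm * p = pCons 0 (p - pCons 0 p)"
    by (simp add: tpm_def mult_pCons_left smult_minus_left)
  then show "coeff (tpm * p) 0 = 0" "coeff (tpm * p) (Suc j) = coeff p j - coeff (pCons 0 p) j"
    by simp_all
qed

lemma coeff_norm_tpm: "coeff_norm tpm = 2"
  by (subst coeff_norm_eq_sum_atMost[of _ 2]) (auto simp: tpm_def numeral_2_eq_2)

fun gkp_row :: "complex \<Rightarrow> complex \<Rightarrow> nat \<Rightarrow> complex poly" where
  "gkp_row g0 gi 0 = 1"
| "gkp_row g0 gi (Suc n) =
     [:g0 - of_nat n / 2, of_nat n + gi:] * gkp_row g0 gi n + tpm * pderiv (gkp_row g0 gi n)"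

lemma gkp_eq_0_above_diagonal: "n < k \<Longrightarrow> gkp a b c a' b' c' n k = 0"
proof (induction n arbitrary: k)
  case (Suc n)
  then obtain j where "k = Suc j" by (cases k) auto
  with Suc show ?case by simp
qed simp

lemma coeff_gkp_row: "coeff (gkp_row g0 gi n) k = gkp (- 1/2) 1 g0 1 (- 1) gi n k"
proof (induction n arbitrary: k)
  case (Suc n)
  show ?case
  proof (cases k)
    case 0
    then show ?thesis
      using Suc by (simp add: coeff_tpm_mult mult_pCons_left)
  next
    case (Suc j)
    let ?P = "gkp_row g0 gi n"
    have "coeff (gkp_row g0 gi (Suc n)) (Suc j) =
        (g0 - of_nat n / 2) * coeff ?P (Suc j) + (of_nat n + gi) * coeff ?P j
        + (of_nat (Suc j) * coeff ?P (Suc j) - of_nat j * coeff ?P j)"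
      by (cases j) (simp_all add: coeff_tpm_mult mult_pCons_left coeff_pderiv)
    then show ?thesis
      using Suc Suc.IH by (simp add: algebra_simps)
  qed
qed (simp add: coeff_1)

lemma degree_gkp_row: "degree (gkp_row g0 gi n) \<le> n"
  by (rule degree_le) (simp add: coeff_gkp_row gkp_eq_0_above_diagonal)

lemma coeff_norm_gkp_row:
  "coeff_norm (gkp_row g0 gi n) \<le> fact n * (cmod g0 + cmod gi + 4) ^ n"
proof (induction n)
  case (Suc n)
  define K where "K = cmod g0 + cmod gi + 4"
  let ?P = "gkp_row g0 gi n"
  have "cmod (g0 - of_nat n / 2) \<le> cmod g0 + n"
    using norm_triangle_ineq4[of g0 "of_nat n / 2"] by (simp add: norm_divide)
  moreover have "cmod (of_nat n + gi) \<le> n + cmod gi"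
    using norm_triangle_ineq[of "of_nat n" gi] by simp
  ultimately have lin: "coeff_norm [:g0 - of_nat n / 2, of_nat n + gi:] \<le> cmod g0 + cmod gi + 2 * real n"
    using coeff_norm_pCons_pCons[of "g0 - of_nat n / 2" "of_nat n + gi"] by simp
  have der: "coeff_norm (pderiv ?P) \<le> real n * coeff_norm ?P"
    using degree_gkp_row[of g0 gi n]
    by (intro order_trans[OF coeff_norm_pderiv] mult_right_mono coeff_norm_nonneg) simp
  have "coeff_norm (gkp_row g0 gi (Suc n))
      \<le> (cmod g0 + cmod gi + 2 * real n) * coeff_norm ?P + 2 * (real n * coeff_norm ?P)"
    unfolding gkp_row.simps
    by (intro order_trans[OF coeff_norm_add] add_mono order_trans[OF coeff_norm_mult]
        mult_right_mono lin coeff_norm_nonneg)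
       (simp add: coeff_norm_tpm der)
  also have "\<dots> = (cmod g0 + cmod gi + 4 * real n) * coeff_norm ?P"
    by (simp add: algebra_simps)
  also have "\<dots> \<le> (Suc n * K) * coeff_norm ?P"
    by (rule mult_right_mono) (auto simp: K_def algebra_simps coeff_norm_nonneg)
  also have "\<dots> \<le> (Suc n * K) * (fact n * K ^ n)"
    using Suc.IH by (intro mult_left_mono) (auto simp: K_def)
  also have "\<dots> = fact (Suc n) * K ^ Suc n"
    by (simp add: algebra_simps)
  finally show ?case by (simp add: K_def)
qed simp

definition tpm_pderiv :: "complex poly fps \<Rightarrow> complex poly fps" where
  "tpm_pderiv f = Abs_fps (\<lambda>n. tpm * pderiv (fps_nth f n))"

lemma fps_nth_tpm_pderiv [simp]: "fps_nth (tpm_pderiv f) n = tpm * pderiv (fps_nth f n)"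
  by (simp add: tpm_pderiv_def)

lemma tpm_pderiv_add: "tpm_pderiv (f + g) = tpm_pderiv f + tpm_pderiv g"
  and tpm_pderiv_diff: "tpm_pderiv (f - g) = tpm_pderiv f - tpm_pderiv g"
  and tpm_pderiv_fps_const: "tpm_pderiv (fps_const p) = fps_const (tpm * pderiv p)"
  and tpm_pderiv_fps_deriv: "tpm_pderiv (fps_deriv f) = fps_deriv (tpm_pderiv f)"
  by (auto intro!: fps_ext simp: pderiv_add pderiv_diff pderiv_mult pderiv_of_nat
      algebra_simps simp del: of_nat_Suc)

lemma tpm_pderiv_mult: "tpm_pderiv (f * g) = tpm_pderiv f * g + f * tpm_pderiv g"
proof (rule fps_ext)
  have pderiv_sum: "pderiv (sum h A) = (\<Sum>x\<in>A. pderiv (h x))" for h :: "nat \<Rightarrow> complex poly" and A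
    using higher_pderiv_sum[of 1 h A] by simp
  show "fps_nth (tpm_pderiv (f * g)) n = fps_nth (tpm_pderiv f * g + f * tpm_pderiv g) n" for n
    unfolding fps_add_nth fps_mult_nth fps_nth_tpm_pderiv
    by (simp add: pderiv_sum pderiv_mult sum_distrib_left sum.distrib[symmetric] algebra_simps)
qed

text \<open>Series in \<open>z\<close> with polynomial coefficients in \<open>t\<close> are \<open>complex poly fps\<close>; on them
  \<open>gkp_op\<close> is the operator \<open>(1 + (1/2 - t) z) \<partial>\<^sub>z - t (1 - t) \<partial>\<^sub>t\<close>.\<close>

definition gkp_op :: "complex poly fps \<Rightarrow> complex poly fps" where
  "gkp_op f = (1 + fps_const [:1/2, -1:] * fps_X) * fps_deriv f - tpm_pderiv f"

lemma gkp_op_add: "gkp_op (f + g) = gkp_op f + gkp_op g"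
  and gkp_op_diff: "gkp_op (f - g) = gkp_op f - gkp_op g"
  and gkp_op_mult: "gkp_op (f * g) = gkp_op f * g + f * gkp_op g"
  and gkp_op_fps_const: "gkp_op (fps_const [:k:]) = 0"
  by (simp_all add: gkp_op_def tpm_pderiv_add tpm_pderiv_diff tpm_pderiv_mult
      tpm_pderiv_fps_const fps_deriv_mult algebra_simps)

lemma fps_nth_gkp_op:
  "fps_nth (gkp_op f) n = of_nat (Suc n) * fps_nth f (Suc n)
     + [:1/2, -1:] * of_nat n * fps_nth f n - tpm * pderiv (fps_nth f n)"
  by (cases n) (simp_all add: gkp_op_def algebra_simps del: of_nat_Suc)

lemma gkp_op_eigen_fps_deriv:
  assumes "gkp_op f = fps_const a * f"
  shows "gkp_op (fps_deriv f) = fps_const (a - [:1/2, -1:]) * fps_deriv f"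
proof -
  have "fps_deriv (gkp_op f) = gkp_op (fps_deriv f) + fps_const [:1/2, -1:] * fps_deriv f"
    by (simp add: gkp_op_def fps_deriv_mult tpm_pderiv_fps_deriv algebra_simps)
  then show ?thesis
    using assms by (simp add: fps_const_sub[symmetric] algebra_simps del: fps_const_sub)
qed

lemma gkp_op_eigen_unique:
  assumes "gkp_op f = fps_const a * f" and "fps_nth f 0 = 0"
  shows "f = 0"
proof (rule fps_ext)
  fix n
  show "fps_nth f n = fps_nth 0 n"
  proof (induction n)
    case (Suc n)
    have "fps_nth (gkp_op f) n = a * fps_nth f n"
      using assms(1) by simp
    with Suc have "(of_nat (Suc n) :: complex poly) * fps_nth f (Suc n) = 0"
      by (simp add: fps_nth_gkp_op del: of_nat_Suc)
    then show ?case
      by (simp del: of_nat_Suc)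
  qed (use assms(2) in simp)
qed

text \<open>\<open>trig_coeff c n\<close> is the coefficient of \<open>z\<^sup>n\<close> in \<open>cos w + \<mu> sin w\<close>, where
  \<open>w = (z/2) \<surd>(t (1 - t))\<close> and \<open>\<mu> \<surd>(t (1 - t)) = c - t\<close>; it is a polynomial in \<open>t\<close> because
  \<open>w\<^sup>2 = z\<^sup>2 t (1 - t) / 4\<close> and \<open>\<mu> w = (c - t) z / 2\<close>. The cases \<open>c = 1\<close> and \<open>c = 0\<close> give
  \<open>\<surd>(s\<^sub>+/t\<^sub>+)\<close> and \<open>\<surd>(s\<^sub>-/t\<^sub>-)\<close>.\<close>

definition trig_coeff :: "complex \<Rightarrow> nat \<Rightarrow> complex poly" where
  "trig_coeff c n = smult (of_real (cos_coeff n) / 2 ^ n) (tpm ^ (n div 2))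
     + smult (of_real (sin_coeff n) / 2 ^ n) ([:c, -1:] * tpm ^ (n div 2))"

lemma trig_coeff_even:
  "trig_coeff c (2 * m) = smult (of_real (cos_coeff (2 * m)) / 2 ^ (2 * m)) (tpm ^ m)"
  by (simp add: trig_coeff_def sin_coeff_def)

lemma trig_coeff_odd:
  "trig_coeff c (Suc (2 * m)) =
     smult (of_real (sin_coeff (Suc (2 * m))) / 2 ^ Suc (2 * m)) ([:c, -1:] * tpm ^ m)"
  by (simp add: trig_coeff_def cos_coeff_def del: mult_pCons_left)

lemma trig_coeff_0 [simp]: "trig_coeff c 0 = 1"
  by (simp add: trig_coeff_def)

lemma tpm_mult_pderiv_power: "tpm * pderiv (tpm ^ m) = smult (of_nat m) (tpm ^ m * [:1, -2:])"
  by (cases m) (simp_all only: pderiv_power_Suc pderiv_tpm, simp_all add: algebra_simps)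

lemma trig_coeff_recurrence_even:
  fixes m :: nat
  defines "n \<equiv> 2 * m"
  shows "of_nat (Suc n) * trig_coeff c (Suc n) + [:1/2, -1:] * of_nat n * trig_coeff c n
           - tpm * pderiv (trig_coeff c n) = [:c/2, -1/2:] * trig_coeff c n"
proof -
  define C where "C = (of_real (cos_coeff (2 * m)) / 2 ^ (2 * m) :: complex)"
  have "of_nat (Suc n) * trig_coeff c (Suc n) = smult (C / 2) ([:c, -1:] * tpm ^ m)"
    unfolding n_def trig_coeff_odd
    by (rule poly_ext) (simp add: sin_coeff_Suc C_def field_simps del: of_nat_Suc mult_pCons_left)
  moreover have "trig_coeff c n = smult C (tpm ^ m)"
    by (simp add: n_def trig_coeff_even C_def)
  ultimately show ?thesis
    by (intro poly_ext)
       (simp add: pderiv_smult tpm_mult_pderiv_power n_def poly_tpm field_simps power2_eq_square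
        del: mult_pCons_left)
qed

lemma trig_coeff_recurrence_odd:
  fixes m :: nat
  defines "n \<equiv> Suc (2 * m)"
  assumes c: "c * c = c"
  shows "of_nat (Suc n) * trig_coeff c (Suc n) + [:1/2, -1:] * of_nat n * trig_coeff c n
           - tpm * pderiv (trig_coeff c n) = [:c/2, -1/2:] * trig_coeff c n" (is "?lhs = ?rhs")
proof -
  define S where "S = (of_real (sin_coeff (Suc (2 * m))) / 2 ^ Suc (2 * m) :: complex)"
  define L where "L = [:c, -1:]"
  define Q where "Q = tpm ^ m"
  have next_coeff: "of_nat (Suc n) * trig_coeff c (Suc n) = smult (- S / 2) (tpm * Q)"
    unfolding n_def trig_coeff_even[of _ "Suc m", simplified] Q_def
    by (rule poly_ext) (simp add: cos_coeff_Suc S_def field_simps del: of_nat_Suc)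
  have this_coeff: "trig_coeff c n = smult S (L * Q)"
    by (simp add: n_def trig_coeff_odd S_def L_def Q_def del: mult_pCons_left)
  have "pderiv (L * Q) = L * pderiv Q - Q"
    by (simp only: pderiv_mult L_def) (simp add: pderiv_pCons del: mult_pCons_left)
  then have deriv: "tpm * pderiv (L * Q) = L * smult (of_nat m) (Q * [:1, -2:]) - tpm * Q"
    by (simp only: Q_def tpm_mult_pderiv_power[symmetric] right_diff_distrib mult.left_commute)
  have "poly ?lhs x - poly ?rhs x = S * poly Q x * (c - c * c) / 2" for x
    unfolding next_coeff this_coeff pderiv_smult mult_smult_right deriv
    by (simp add: L_def n_def poly_tpm field_simps power2_eq_square)
  then show ?thesis
    using c by (intro poly_ext) simp
qed

lemma trig_coeff_recurrence:
  assumes "c * c = c"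
  shows "of_nat (Suc n) * trig_coeff c (Suc n) + [:1/2, -1:] * of_nat n * trig_coeff c n
           - tpm * pderiv (trig_coeff c n) = [:c/2, -1/2:] * trig_coeff c n"
proof -
  have "n = 2 * (n div 2) \<or> n = Suc (2 * (n div 2))"
    by presburger
  then show ?thesis
    by (metis trig_coeff_recurrence_even trig_coeff_recurrence_odd[OF assms])
qed

definition trig_fps :: "complex \<Rightarrow> complex poly fps" where
  "trig_fps c = Abs_fps (trig_coeff c)"

lemma fps_nth_trig_fps [simp]: "fps_nth (trig_fps c) n = trig_coeff c n"
  by (simp add: trig_fps_def)

lemma gkp_op_trig_fps:
  "c * c = c \<Longrightarrow> gkp_op (trig_fps c) = fps_const [:c/2, -1/2:] * trig_fps c"
  by (rule fps_ext) (simp add: fps_nth_gkp_op trig_coeff_recurrence del: of_nat_Suc mult_pCons_left)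

definition gkp_egf :: "complex \<Rightarrow> complex \<Rightarrow> complex poly fps" where
  "gkp_egf g0 gi = Abs_fps (\<lambda>n. smult (1 / fact n) (gkp_row g0 gi n))"

lemma fps_nth_gkp_egf: "fps_nth (gkp_egf g0 gi) n = smult (1 / fact n) (gkp_row g0 gi n)"
  by (simp add: gkp_egf_def)

lemma gkp_op_gkp_egf: "gkp_op (gkp_egf g0 gi) = fps_const [:g0, gi:] * gkp_egf g0 gi"
proof (rule fps_ext)
  fix n
  let ?P = "gkp_row g0 gi n"
  have "fps_nth (gkp_op (gkp_egf g0 gi)) n
      = smult (1 / fact n) (gkp_row g0 gi (Suc n) + [:1/2, -1:] * of_nat n * ?P - tpm * pderiv ?P)"
    unfolding fps_nth_gkp_op fps_nth_gkp_egf pderiv_smult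
    by (rule poly_ext) (simp add: field_simps del: gkp_row.simps of_nat_Suc)
  also have "gkp_row g0 gi (Suc n) + [:1/2, -1:] * of_nat n * ?P - tpm * pderiv ?P = [:g0, gi:] * ?P"
    by (rule poly_ext) (simp add: algebra_simps)
  finally show "fps_nth (gkp_op (gkp_egf g0 gi)) n = fps_nth (fps_const [:g0, gi:] * gkp_egf g0 gi) n"
    by (simp add: fps_nth_gkp_egf)
qed

text \<open>\<open>ode_defect u v A B P = 0\<close> is the linear ODE in \<open>z\<close> solved by \<open>P = (A\<^sup>2)\<^sup>u (B\<^sup>2)\<^sup>v\<close>,
  cleared of denominators.\<close>

definition ode_defect :: "complex \<Rightarrow> complex \<Rightarrow> complex poly fps \<Rightarrow> complex poly fps
    \<Rightarrow> complex poly fps \<Rightarrow> complex poly fps" where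
  "ode_defect u v A B P = A * B * fps_deriv P
     - (fps_const [:2 * u:] * fps_deriv A * B + fps_const [:2 * v:] * A * fps_deriv B) * P"

lemma gkp_op_ode_defect:
  assumes "gkp_op A = fps_const a * A" "gkp_op B = fps_const b * B" "gkp_op P = fps_const p * P"
  shows "gkp_op (ode_defect u v A B P)
           = fps_const (a + b + p - [:1/2, -1:]) * ode_defect u v A B P"
  unfolding ode_defect_def
  by (simp only: gkp_op_diff gkp_op_add gkp_op_mult gkp_op_fps_const assms
      gkp_op_eigen_fps_deriv[OF assms(1)] gkp_op_eigen_fps_deriv[OF assms(2)]
      gkp_op_eigen_fps_deriv[OF assms(3)] fps_const_add[symmetric] fps_const_sub[symmetric])
     algebra

lemma ode_defect_gkp_egf: "ode_defect g0 (- g0 - gi) (trig_fps 1) (trig_fps 0) (gkp_egf g0 gi) = 0"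
proof (rule gkp_op_eigen_unique)
  show "gkp_op (ode_defect g0 (- g0 - gi) (trig_fps 1) (trig_fps 0) (gkp_egf g0 gi)) =
      fps_const ([:1/2, -1/2:] + [:0, -1/2:] + [:g0, gi:] - [:1/2, -1:]) *
      ode_defect g0 (- g0 - gi) (trig_fps 1) (trig_fps 0) (gkp_egf g0 gi)"
    by (rule gkp_op_ode_defect) (simp_all add: gkp_op_trig_fps gkp_op_gkp_egf)
  show "fps_nth (ode_defect g0 (- g0 - gi) (trig_fps 1) (trig_fps 0) (gkp_egf g0 gi)) 0 = 0"
    by (simp add: ode_defect_def fps_nth_gkp_egf trig_coeff_def cos_coeff_def sin_coeff_def numeral_2_eq_2)
       (simp add: field_simps)
qed

definition fps_poly_at :: "complex \<Rightarrow> complex poly fps \<Rightarrow> complex fps" where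
  "fps_poly_at t f = Abs_fps (\<lambda>n. poly (fps_nth f n) t)"

lemma fps_nth_fps_poly_at [simp]: "fps_nth (fps_poly_at t f) n = poly (fps_nth f n) t"
  by (simp add: fps_poly_at_def)

lemma fps_poly_at_add: "fps_poly_at t (f + g) = fps_poly_at t f + fps_poly_at t g"
  and fps_poly_at_diff: "fps_poly_at t (f - g) = fps_poly_at t f - fps_poly_at t g"
  and fps_poly_at_mult: "fps_poly_at t (f * g) = fps_poly_at t f * fps_poly_at t g"
  and fps_poly_at_fps_const: "fps_poly_at t (fps_const p) = fps_const (poly p t)"
  and fps_poly_at_fps_deriv: "fps_poly_at t (fps_deriv f) = fps_deriv (fps_poly_at t f)"
  by (auto intro!: fps_ext simp: fps_mult_nth poly_sum fps_const_def simp del: of_nat_Suc)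

lemma fps_conv_radius_ge_of_geometric_bound:
  fixes f :: "complex fps"
  assumes bound: "\<And>n. norm (fps_nth f n) \<le> C * R ^ n" and R: "R > 0"
  shows "ereal (1 / R) \<le> fps_conv_radius f"
  unfolding fps_conv_radius_def
proof (rule conv_radius_geI_ex')
  fix r :: real
  assume r: "0 < r" "ereal r < ereal (1 / R)"
  then have "summable (\<lambda>n. C * (R * r) ^ n)"
    using R by (intro summable_mult summable_geometric) (auto simp: field_simps)
  then show "summable (\<lambda>n. fps_nth f n * of_real r ^ n)"
  proof (rule summable_norm_cancel[OF summable_comparison_test[rotated]])
    show "\<exists>N. \<forall>n\<ge>N. norm (norm (fps_nth f n * of_real r ^ n)) \<le> C * (R * r) ^ n"
      using r bound by (auto simp: norm_mult norm_power power_mult_distrib intro!: mult_right_mono)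
  qed
qed

lemma has_sum_poly_times_power:
  fixes p :: "complex poly"
  shows "((\<lambda>k. coeff p k * t ^ k * z ^ n) has_sum poly p t * z ^ n) UNIV"
proof (rule has_sum_finite_neutralI[of "{..degree p}"])
  show "poly p t * z ^ n = (\<Sum>k\<in>{..degree p}. coeff p k * t ^ k * z ^ n)"
    unfolding poly_altdef sum_distrib_right by (rule refl)
qed (auto simp: coeff_eq_0)

lemma abs_summable_double_series:
  assumes t: "cmod t \<le> 1" and summable: "summable (\<lambda>n. coeff_norm (p n) * cmod z ^ n)"
  shows "(\<lambda>(n, k). norm (coeff (p n) k * t ^ k * z ^ n)) summable_on UNIV"
proof -
  let ?f = "\<lambda>n k. norm (coeff (p n) k * t ^ k * z ^ n)"
  have row: "(?f n has_sum (\<Sum>k\<le>degree (p n). ?f n k)) UNIV" for n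
    by (rule has_sum_finite_neutralI) (auto simp: coeff_eq_0)
  have row_bound: "(\<Sum>k\<le>degree (p n). ?f n k) \<le> coeff_norm (p n) * cmod z ^ n" for n
    unfolding coeff_norm_def sum_distrib_right
    by (intro sum_mono)
       (auto simp: norm_mult norm_power intro!: mult_right_mono mult_left_le power_le_one t)
  have "(\<lambda>n. coeff_norm (p n) * cmod z ^ n) summable_on UNIV"
    using summable
    by (subst summable_on_UNIV_nonneg_real_iff) (auto intro!: mult_nonneg_nonneg coeff_norm_nonneg)
  then have "(\<lambda>n. infsum (?f n) UNIV) summable_on UNIV"
    by (rule summable_on_comparison_test)
       (use row_bound infsumI[OF row] in \<open>auto intro: infsum_nonneg sum_nonneg\<close>)
  then have "(\<lambda>x. norm (coeff (p (fst x)) (snd x) * t ^ snd x * z ^ fst x))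
      summable_on Sigma UNIV (\<lambda>_. UNIV)"
    using row
    by (intro Infinite_Sum.abs_summable_on_Sigma_iff[THEN iffD2])
       (auto simp: summable_on_def infsum_nonneg)
  then show ?thesis
    by (simp add: case_prod_unfold)
qed

lemma has_sum_double_series:
  assumes t: "cmod t \<le> 1" and summable: "summable (\<lambda>n. coeff_norm (p n) * cmod z ^ n)"
  shows "((\<lambda>(n, k). coeff (p n) k * t ^ k * z ^ n) has_sum (\<Sum>n. poly (p n) t * z ^ n)) UNIV"
proof -
  have norm_summable: "summable (\<lambda>n. norm (poly (p n) t * z ^ n))"
  proof (rule summable_comparison_test[OF _ summable])
    show "\<exists>N. \<forall>n\<ge>N. norm (norm (poly (p n) t * z ^ n)) \<le> coeff_norm (p n) * cmod z ^ n"
      using t by (auto simp: norm_mult norm_power intro!: mult_right_mono norm_poly_le_coeff_norm)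
  qed
  then have "((\<lambda>n. poly (p n) t * z ^ n) has_sum (\<Sum>n. poly (p n) t * z ^ n)) UNIV"
    by (rule norm_summable_imp_has_sum[OF _ summable_sums[OF summable_norm_cancel]]) fact+
  moreover have "(\<lambda>(n, k). coeff (p n) k * t ^ k * z ^ n) summable_on Sigma UNIV (\<lambda>_. UNIV)"
    using abs_summable_double_series[OF t summable]
    by (intro abs_summable_summable[where f = "\<lambda>(n, k). coeff (p n) k * t ^ k * z ^ n"])
       (simp add: case_prod_unfold)
  ultimately show ?thesis
    using has_sum_SigmaI[where f = "\<lambda>(n, k). coeff (p n) k * t ^ k * z ^ n" and A = UNIV
        and B = "\<lambda>_. UNIV" and g = "\<lambda>n. poly (p n) t * z ^ n"]
    by (simp add: has_sum_poly_times_power)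
qed

lemma coeff_norm_trig_coeff:
  assumes "cmod c \<le> 1"
  shows "coeff_norm (trig_coeff c n) \<le> 3"
proof -
  define k where "k = n div 2"
  define L where "L = [:c, -1:]"
  have tpm_power: "coeff_norm (tpm ^ k) \<le> 2 ^ k"
    using coeff_norm_power[of tpm k] by (simp add: coeff_norm_tpm)
  have "coeff_norm L \<le> 2"
    using coeff_norm_pCons_pCons[of c "-1"] assms by (simp add: L_def)
  then have L_tpm_power: "coeff_norm (L * tpm ^ k) \<le> 2 * 2 ^ k"
    by (intro order_trans[OF coeff_norm_mult] mult_mono tpm_power) (auto simp: coeff_norm_nonneg)
  have trig: "cmod (of_real (cos_coeff n) / 2 ^ n :: complex) \<le> 1 / 2 ^ n"
    "cmod (of_real (sin_coeff n) / 2 ^ n :: complex) \<le> 1 / 2 ^ n"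
    using fact_ge_1[of n, where 'a = real]
    by (auto simp: norm_divide norm_power cos_coeff_def sin_coeff_def field_simps)
  have "coeff_norm (trig_coeff c n) \<le> cmod (of_real (cos_coeff n) / 2 ^ n :: complex) * coeff_norm (tpm ^ k)
      + cmod (of_real (sin_coeff n) / 2 ^ n :: complex) * coeff_norm (L * tpm ^ k)"
    unfolding trig_coeff_def k_def[symmetric] L_def[symmetric]
    by (rule order_trans[OF coeff_norm_add]) (simp add: coeff_norm_smult)
  also have "\<dots> \<le> 1 / 2 ^ n * 2 ^ k + 1 / 2 ^ n * (2 * 2 ^ k)"
    by (intro add_mono mult_mono trig tpm_power L_tpm_power) (auto simp: coeff_norm_nonneg)
  also have "\<dots> = 3 * (2 ^ k / 2 ^ n)"
    by (simp add: field_simps)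
  also have "\<dots> \<le> 3 * 1"
    using power_increasing[of k n "2 :: real"] by (intro mult_left_mono) (auto simp: k_def)
  finally show ?thesis by simp
qed

lemma coeff_norm_fps_nth_mult:
  assumes "\<And>n. coeff_norm (fps_nth f n) \<le> C" "\<And>n. coeff_norm (fps_nth g n) \<le> D"
  shows "coeff_norm (fps_nth (f * g) n) \<le> C * D * 2 ^ n"
proof -
  have "coeff_norm (fps_nth (f * g) n) \<le> (\<Sum>i=0..n. coeff_norm (fps_nth f i * fps_nth g (n - i)))"
    unfolding fps_mult_nth by (rule coeff_norm_sum)
  also have "\<dots> \<le> (\<Sum>i=0..n. C * D)"
    using assms
    by (intro sum_mono order_trans[OF coeff_norm_mult] mult_mono) (auto intro: order_trans[OF coeff_norm_nonneg])
  also have "\<dots> = C * D * (real n + 1)"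
    by simp
  also have "\<dots> \<le> C * D * 2 ^ n"
  proof (rule mult_left_mono)
    have "real (Suc n) \<le> real (2 ^ n)"
      using less_exp[of n] by (intro of_nat_mono) linarith
    then show "real n + 1 \<le> 2 ^ n"
      by simp
    show "0 \<le> C * D"
      using assms(1)[of 0] assms(2)[of 0] coeff_norm_nonneg[of "fps_nth f 0"]
        coeff_norm_nonneg[of "fps_nth g 0"]
      by simp
  qed
  finally show ?thesis .
qed

lemma gkp_w_power2: "gkp_w t z ^ 2 = z ^ 2 / 4 * (t - t ^ 2)"
proof -
  have "gkp_w t z ^ 2 = (z / 2) ^ 2 * (csqrt t ^ 2 * csqrt (1 - t) ^ 2)"
    by (simp only: gkp_w_def power_mult_distrib)
  also have "\<dots> = z ^ 2 / 4 * (t - t ^ 2)"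
    by (simp only: power2_csqrt) (simp add: field_simps power2_eq_square)
  finally show ?thesis .
qed

lemma trig_coeff_times_power:
  assumes mu: "\<mu> * (csqrt t * csqrt (1 - t)) = c - t"
  shows "poly (trig_coeff c n) t * z ^ n
           = cos_coeff n *\<^sub>R gkp_w t z ^ n + \<mu> * (sin_coeff n *\<^sub>R gkp_w t z ^ n)"
proof -
  define w where "w = gkp_w t z"
  define k where "k = n div 2"
  have w_even: "w ^ (2 * k) = z ^ (2 * k) / 2 ^ (2 * k) * (t - t ^ 2) ^ k"
    by (simp add: power_mult w_def gkp_w_power2 power_mult_distrib power_divide)
  have mu_w: "\<mu> * w = z / 2 * (c - t)"
    using mu by (simp add: w_def gkp_w_def)
  have "n = 2 * k \<or> n = Suc (2 * k)"
    unfolding k_def by presburger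
  then show ?thesis
  proof
    assume n: "n = 2 * k"
    show ?thesis
      unfolding w_def[symmetric] n trig_coeff_even w_even
      by (simp add: sin_coeff_def poly_tpm scaleR_conv_of_real field_simps)
  next
    assume n: "n = Suc (2 * k)"
    have "\<mu> * (sin_coeff n *\<^sub>R w ^ n) = of_real (sin_coeff n) * (\<mu> * w) * w ^ (2 * k)"
      by (simp add: n scaleR_conv_of_real)
    also have "\<dots> = of_real (sin_coeff n) * (z / 2 * (c - t)) * (z ^ (2 * k) / 2 ^ (2 * k) * (t - t ^ 2) ^ k)"
      by (simp only: mu_w w_even)
    finally show ?thesis
      unfolding w_def[symmetric] n trig_coeff_odd
      by (simp add: cos_coeff_def poly_tpm scaleR_conv_of_real field_simps)
  qed
qed

lemma eval_fps_trig_fps: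
  assumes "\<mu> * (csqrt t * csqrt (1 - t)) = c - t"
  shows "eval_fps (fps_poly_at t (trig_fps c)) z = cos (gkp_w t z) + \<mu> * sin (gkp_w t z)"
proof -
  have "(\<lambda>n. poly (trig_coeff c n) t * z ^ n) sums (cos (gkp_w t z) + \<mu> * sin (gkp_w t z))"
    unfolding trig_coeff_times_power[OF assms]
    by (intro sums_add cos_converges sums_mult sin_converges)
  then show ?thesis
    by (simp add: eval_fps_def sums_iff)
qed

lemma eval_fps_trig_fps_1_power2:
  assumes "t \<noteq> 0"
  shows "eval_fps (fps_poly_at t (trig_fps 1)) z ^ 2 = s_plus t z / t"
proof -
  define u v where "u = csqrt t" and "v = csqrt (1 - t)"
  have "v / u * (u * v) = 1 - t"
    using assms by (simp add: u_def v_def power2_eq_square[symmetric])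
  then have "eval_fps (fps_poly_at t (trig_fps 1)) z = cos (gkp_w t z) + v / u * sin (gkp_w t z)"
    unfolding u_def v_def by (rule eval_fps_trig_fps)
  also have "\<dots> = (u * cos (gkp_w t z) + v * sin (gkp_w t z)) / u"
    using assms by (simp add: u_def field_simps)
  moreover have "u ^ 2 = t"
    by (simp add: u_def)
  ultimately show ?thesis
    by (simp add: s_plus_def u_def[symmetric] v_def[symmetric] power_divide)
qed

lemma eval_fps_trig_fps_0_power2:
  assumes "1 - t \<noteq> 0"
  shows "eval_fps (fps_poly_at t (trig_fps 0)) z ^ 2 = s_minus t z / (1 - t)"
proof -
  define u v where "u = csqrt t" and "v = csqrt (1 - t)"
  have "- u / v * (u * v) = 0 - t"
    using assms by (simp add: u_def v_def power2_eq_square[symmetric])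
  then have "eval_fps (fps_poly_at t (trig_fps 0)) z = cos (gkp_w t z) + - u / v * sin (gkp_w t z)"
    unfolding u_def v_def by (rule eval_fps_trig_fps)
  also have "\<dots> = (v * cos (gkp_w t z) - u * sin (gkp_w t z)) / v"
    using assms by (simp add: v_def field_simps)
  moreover have "v ^ 2 = 1 - t"
    by (simp add: v_def)
  ultimately show ?thesis
    by (simp add: s_minus_def u_def[symmetric] v_def[symmetric] power_divide)
qed

lemma coeff_norm_gkp_egf: "coeff_norm (fps_nth (gkp_egf g0 gi) n) \<le> (cmod g0 + cmod gi + 4) ^ n"
proof -
  have "coeff_norm (fps_nth (gkp_egf g0 gi) n) = coeff_norm (gkp_row g0 gi n) / fact n"
    by (simp add: fps_nth_gkp_egf coeff_norm_smult norm_divide)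
  also have "\<dots> \<le> fact n * (cmod g0 + cmod gi + 4) ^ n / fact n"
    by (intro divide_right_mono coeff_norm_gkp_row) auto
  finally show ?thesis by simp
qed

lemma fps_conv_radius_fps_poly_at:
  assumes "\<And>n. coeff_norm (fps_nth f n) \<le> C * R ^ n" "R > 0" "cmod t \<le> 1"
  shows "ereal (1 / R) \<le> fps_conv_radius (fps_poly_at t f)"
  using assms by (intro fps_conv_radius_ge_of_geometric_bound[where C = C])
    (auto intro: order_trans[OF norm_poly_le_coeff_norm])

lemma has_sum_fps_poly_at:
  assumes bound: "\<And>n. coeff_norm (fps_nth f n) \<le> C * R ^ n"
    and R: "R \<ge> 0" and t: "cmod t \<le> 1" and z: "R * cmod z < 1"
  shows "((\<lambda>(n, k). coeff (fps_nth f n) k * t ^ k * z ^ n) has_sum eval_fps (fps_poly_at t f) z) UNIV"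
proof -
  have "summable (\<lambda>n. C * (R * cmod z) ^ n)"
    using R z order_trans[OF coeff_norm_nonneg bound[of 0]]
    by (intro summable_mult summable_geometric) auto
  then have "summable (\<lambda>n. coeff_norm (fps_nth f n) * cmod z ^ n)"
    by (rule summable_comparison_test[rotated])
       (auto simp: coeff_norm_nonneg power_mult_distrib mult.assoc[symmetric] bound
        intro!: mult_right_mono)
  then show ?thesis
    using has_sum_double_series[OF t] by (simp add: eval_fps_def)
qed

lemma analytic2_at_eval_fps_poly_at_power2:
  assumes bound: "\<And>n. coeff_norm (fps_nth f n) \<le> C"
  shows "analytic2_at (\<lambda>t z. eval_fps (fps_poly_at t f) z ^ 2) 0 0"
  unfolding analytic2_at_def
proof (intro exI[of _ "1/4"] conjI exI[of _ "\<lambda>n k. coeff (fps_nth (f * f) n) k"] allI impI)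
  fix t z :: complex
  assume "cmod (t - 0) < 1/4 \<and> cmod (z - 0) < 1/4"
  then have t: "cmod t \<le> 1" and z: "cmod z < 1/4"
    by auto
  have "ereal (1 / 1) \<le> fps_conv_radius (fps_poly_at t f)"
    using bound t by (intro fps_conv_radius_fps_poly_at[where C = C]) auto
  then have "ereal (norm z) < fps_conv_radius (fps_poly_at t f)"
    by (rule less_le_trans[rotated]) (use z in simp)
  then have "eval_fps (fps_poly_at t (f * f)) z = eval_fps (fps_poly_at t f) z ^ 2"
    by (simp add: fps_poly_at_mult eval_fps_mult power2_eq_square)
  moreover have "((\<lambda>(n, k). coeff (fps_nth (f * f) n) k * t ^ k * z ^ n) has_sum
      eval_fps (fps_poly_at t (f * f)) z) UNIV"
    using z by (intro has_sum_fps_poly_at[OF coeff_norm_fps_nth_mult[OF bound bound] _ t]) auto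
  ultimately show "((\<lambda>(n, k). coeff (fps_nth (f * f) n) k * (t - 0) ^ k * (z - 0) ^ n) has_sum
      eval_fps (fps_poly_at t f) z ^ 2) UNIV"
    by simp
qed simp

lemma norm_eval_fps_minus_constant_le:
  fixes f :: "complex fps"
  assumes bound: "\<And>n. norm (fps_nth f n) \<le> C" and z: "norm z < 1"
  shows "norm (eval_fps f z - fps_nth f 0) \<le> C * norm z / (1 - norm z)"
proof -
  have "ereal (1 / 1) \<le> fps_conv_radius f"
    using bound by (intro fps_conv_radius_ge_of_geometric_bound[where C = C]) auto
  then have "ereal (norm z) < fps_conv_radius f"
    by (rule less_le_trans[rotated]) (use z in simp)
  then have "(\<lambda>n. fps_nth f n * z ^ n) sums eval_fps f z"
    by (rule sums_eval_fps)
  then have tail: "(\<lambda>n. fps_nth f (Suc n) * z ^ Suc n) sums (eval_fps f z - fps_nth f 0)"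
    by (subst sums_Suc_iff) simp
  have geometric: "(\<lambda>n. C * norm z * norm z ^ n) sums (C * norm z * (1 / (1 - norm z)))"
    using z by (intro sums_mult geometric_sums) auto
  have "norm (eval_fps f z - fps_nth f 0) \<le> (\<Sum>n. C * norm z * norm z ^ n)"
    unfolding sums_unique[OF tail]
    using bound geometric z
    by (intro norm_suminf_le)
       (auto simp: norm_mult norm_power mult.assoc sums_summable intro!: mult_right_mono)
  then show ?thesis
    using sums_unique[OF geometric] by simp
qed

lemma square_not_in_nonpos_Reals:
  fixes a :: complex
  assumes "Re a > 0"
  shows "a ^ 2 \<notin> \<real>\<^sub>\<le>\<^sub>0"
proof
  assume "a ^ 2 \<in> \<real>\<^sub>\<le>\<^sub>0"
  then have "Re a * Im a = 0" "Re a ^ 2 \<le> Im a ^ 2"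
    by (auto simp: complex_nonpos_Reals_iff power2_eq_square)
  then show False
    using assms mult_pos_pos[OF assms assms] by (simp add: power2_eq_square)
qed

lemma has_field_derivative_Ln_power2:
  assumes "(a has_field_derivative a') (at z)" "Re (a z) > 0"
  shows "((\<lambda>z. Ln (a z ^ 2)) has_field_derivative 2 * a' / a z) (at z)"
proof -
  have "a z \<noteq> 0"
    using assms(2) by auto
  then show ?thesis
    using DERIV_chain2[OF has_field_derivative_Ln[OF square_not_in_nonpos_Reals[OF assms(2)]]
        DERIV_power[OF assms(1), of 2]]
    by (simp add: field_simps power2_eq_square)
qed

lemma linear_ode_solution_eq_exp:
  fixes h \<phi> \<phi>' :: "complex \<Rightarrow> complex"
  assumes S: "convex S" "0 \<in> S" "z \<in> S"
    and deriv_h: "\<And>w. w \<in> S \<Longrightarrow> (h has_field_derivative h w * \<phi>' w) (at w within S)"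
    and deriv_\<phi>: "\<And>w. w \<in> S \<Longrightarrow> (\<phi> has_field_derivative \<phi>' w) (at w within S)"
    and init: "h 0 = 1" "\<phi> 0 = 0"
  shows "h z = exp (\<phi> z)"
proof -
  define K where "K w = h w * exp (- \<phi> w)" for w
  have K': "(K has_field_derivative 0) (at w within S)" if w: "w \<in> S" for w
  proof -
    have "(K has_field_derivative h w * \<phi>' w * exp (- \<phi> w) + exp (- \<phi> w) * - \<phi>' w * h w)
        (at w within S)"
      unfolding K_def[abs_def]
      by (intro DERIV_mult deriv_h[OF w] DERIV_chain2[OF DERIV_exp] DERIV_minus deriv_\<phi>[OF w])
    then show ?thesis
      by (simp add: algebra_simps)
  qed
  obtain c where c: "\<And>w. w \<in> S \<Longrightarrow> K w = c"
    using has_field_derivative_zero_constant[OF S(1) K'] by blast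
  then have "K z = 1"
    using c[OF S(2)] S(3) by (simp add: K_def init)
  then show ?thesis
    by (simp add: K_def exp_minus field_simps)
qed

lemma ode_solution_eq_powr:
  fixes a b h a' b' h' :: "complex \<Rightarrow> complex"
  assumes deriv: "\<And>z. z \<in> ball 0 \<rho> \<Longrightarrow> (a has_field_derivative a' z) (at z)"
      "\<And>z. z \<in> ball 0 \<rho> \<Longrightarrow> (b has_field_derivative b' z) (at z)"
      "\<And>z. z \<in> ball 0 \<rho> \<Longrightarrow> (h has_field_derivative h' z) (at z)"
    and ode: "\<And>z. z \<in> ball 0 \<rho> \<Longrightarrow> a z * b z * h' z = (2 * u * a' z * b z + 2 * v * a z * b' z) * h z"
    and pos: "\<And>z. z \<in> ball 0 \<rho> \<Longrightarrow> Re (a z) > 0" "\<And>z. z \<in> ball 0 \<rho> \<Longrightarrow> Re (b z) > 0"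
    and init: "a 0 = 1" "b 0 = 1" "h 0 = 1"
    and z: "z \<in> ball 0 \<rho>"
  shows "h z = (a z ^ 2) powr u * (b z ^ 2) powr v"
proof -
  define \<phi>' where "\<phi>' w = u * (2 * a' w / a w) + v * (2 * b' w / b w)" for w
  have zero_in: "0 \<in> ball 0 \<rho>"
    using z order_le_less_trans[OF norm_ge_zero] by simp
  have "h z = exp (u * Ln (a z ^ 2) + v * Ln (b z ^ 2))"
  proof (rule linear_ode_solution_eq_exp[where S = "ball 0 \<rho>" and \<phi>' = \<phi>'
        and \<phi> = "\<lambda>w. u * Ln (a w ^ 2) + v * Ln (b w ^ 2)"])
    fix w :: complex
    assume w: "w \<in> ball 0 \<rho>"
    have "a w \<noteq> 0" "b w \<noteq> 0"
      using pos[OF w] by auto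
    then have "h' w = h w * \<phi>' w"
      using ode[OF w] by (simp add: \<phi>'_def field_simps)
    then show "(h has_field_derivative h w * \<phi>' w) (at w within ball 0 \<rho>)"
      using deriv(3)[OF w] by (metis has_field_derivative_at_within)
    show "((\<lambda>w. u * Ln (a w ^ 2) + v * Ln (b w ^ 2)) has_field_derivative \<phi>' w) (at w within ball 0 \<rho>)"
      unfolding \<phi>'_def
      by (rule has_field_derivative_at_within, intro DERIV_add DERIV_cmult
          has_field_derivative_Ln_power2[OF deriv(1) pos(1)] has_field_derivative_Ln_power2[OF deriv(2) pos(2)] w)
  qed (use zero_in z init in simp_all)
  also have "\<dots> = (a z ^ 2) powr u * (b z ^ 2) powr v"
    using pos[OF z] by (auto simp: powr_def exp_add mult.commute)
  finally show ?thesis .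
qed

lemma eval_fps_ode:
  fixes A B P :: "complex fps"
  assumes ode: "A * B * fps_deriv P = (fps_const u * fps_deriv A * B + fps_const v * A * fps_deriv B) * P"
    and radius: "ereal (norm z) < fps_conv_radius A" "ereal (norm z) < fps_conv_radius B"
      "ereal (norm z) < fps_conv_radius P"
  shows "eval_fps A z * eval_fps B z * eval_fps (fps_deriv P) z
           = (u * eval_fps (fps_deriv A) z * eval_fps B z + v * eval_fps A z * eval_fps (fps_deriv B) z)
             * eval_fps P z"
proof -
  have deriv_radius: "ereal (norm z) < fps_conv_radius (fps_deriv F)"
    if "ereal (norm z) < fps_conv_radius F" for F :: "complex fps"
    using that fps_conv_radius_deriv[of F] by (rule less_le_trans)
  have mult_radius: "ereal (norm z) < fps_conv_radius (F * G)"
    if "ereal (norm z) < fps_conv_radius F" "ereal (norm z) < fps_conv_radius G" for F G :: "complex fps"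
    using that by (intro less_le_trans[OF _ fps_conv_radius_mult]) simp
  have add_radius: "ereal (norm z) < fps_conv_radius (F + G)"
    if "ereal (norm z) < fps_conv_radius F" "ereal (norm z) < fps_conv_radius G" for F G :: "complex fps"
    using that by (intro less_le_trans[OF _ fps_conv_radius_add]) simp
  note radii = radius deriv_radius[OF radius(1)] deriv_radius[OF radius(2)] deriv_radius[OF radius(3)]
  have "eval_fps A z * eval_fps B z * eval_fps (fps_deriv P) z = eval_fps (A * B * fps_deriv P) z"
    by (simp add: eval_fps_mult radii mult_radius)
  also have "\<dots> = eval_fps ((fps_const u * fps_deriv A * B + fps_const v * A * fps_deriv B) * P) z"
    by (simp only: ode)
  also have "\<dots> = (u * eval_fps (fps_deriv A) z * eval_fps B z
      + v * eval_fps A z * eval_fps (fps_deriv B) z) * eval_fps P z"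
    by (simp add: eval_fps_mult eval_fps_add radii mult_radius add_radius)
  finally show ?thesis .
qed

lemma fps_poly_at_gkp_egf_ode:
  fixes g0 gi t :: complex
  defines "A \<equiv> fps_poly_at t (trig_fps 1)" and "B \<equiv> fps_poly_at t (trig_fps 0)"
    and "P \<equiv> fps_poly_at t (gkp_egf g0 gi)"
  shows "A * B * fps_deriv P
           = (fps_const (2 * g0) * fps_deriv A * B + fps_const (2 * (- g0 - gi)) * A * fps_deriv B) * P"
proof -
  have "fps_poly_at t (ode_defect g0 (- g0 - gi) (trig_fps 1) (trig_fps 0) (gkp_egf g0 gi)) = 0"
    by (simp add: ode_defect_gkp_egf fps_poly_at_def fps_zero_def)
  then show ?thesis
    unfolding ode_defect_def fps_poly_at_diff fps_poly_at_add fps_poly_at_mult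
      fps_poly_at_fps_deriv fps_poly_at_fps_const A_def B_def P_def
    by simp
qed

lemma fps_conv_radius_trig_fps:
  assumes "cmod c \<le> 1" "cmod t \<le> 1"
  shows "ereal (1 / 1) \<le> fps_conv_radius (fps_poly_at t (trig_fps c))"
  by (rule fps_conv_radius_fps_poly_at[where C = 3]) (use coeff_norm_trig_coeff assms in auto)

lemma Re_eval_fps_trig_fps_pos:
  assumes "cmod c \<le> 1" "cmod t \<le> 1" "norm w < 1 / 4"
  shows "Re (eval_fps (fps_poly_at t (trig_fps c)) w) > 0"
proof -
  let ?a = "eval_fps (fps_poly_at t (trig_fps c)) w"
  have "norm (fps_nth (fps_poly_at t (trig_fps c)) n) \<le> 3" for n
    using assms by (auto intro: order_trans[OF norm_poly_le_coeff_norm coeff_norm_trig_coeff])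
  then have "norm (?a - fps_nth (fps_poly_at t (trig_fps c)) 0) \<le> 3 * norm w / (1 - norm w)"
    using assms(3) by (intro norm_eval_fps_minus_constant_le) auto
  then have "norm (?a - 1) \<le> 3 * norm w / (1 - norm w)"
    by simp
  also have "\<dots> < 1"
    using assms(3) by (simp add: field_simps)
  finally have "norm (?a - 1) < 1" .
  then show ?thesis
    using abs_Re_le_cmod[of "?a - 1"] by simp
qed

lemma less_inverse_four_mult:
  fixes x K :: real
  assumes "K \<ge> 1" "x < 1 / (4 * K)"
  shows "x < 1 / 4" "K * x < 1"
proof -
  have "4 * K * x < 1"
    using assms by (simp add: field_simps)
  moreover have "x \<le> K * x \<or> x < 0"
    using assms(1) mult_right_mono[of 1 K x] by linarith
  ultimately show "x < 1 / 4" "K * x < 1"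
    using assms(1) by auto
qed

lemma norm_less_fps_conv_radius_gkp:
  assumes t: "cmod t \<le> 1" and z: "cmod z < 1 / (4 * (cmod g0 + cmod gi + 4))"
  shows "ereal (norm z) < fps_conv_radius (fps_poly_at t (trig_fps 1))"
    "ereal (norm z) < fps_conv_radius (fps_poly_at t (trig_fps 0))"
    "ereal (norm z) < fps_conv_radius (fps_poly_at t (gkp_egf g0 gi))"
proof -
  define K where "K = cmod g0 + cmod gi + 4"
  have K: "K \<ge> 1"
    by (simp add: K_def)
  have "norm z < 1 / 1" "norm z < 1 / K"
    using less_inverse_four_mult[OF K z[folded K_def]] K by (simp_all add: field_simps)
  moreover have "ereal (1 / K) \<le> fps_conv_radius (fps_poly_at t (gkp_egf g0 gi))"
    using K t coeff_norm_gkp_egf[of g0 gi, folded K_def]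
    by (intro fps_conv_radius_fps_poly_at[where C = 1]) auto
  ultimately show "ereal (norm z) < fps_conv_radius (fps_poly_at t (trig_fps 1))"
    "ereal (norm z) < fps_conv_radius (fps_poly_at t (trig_fps 0))"
    "ereal (norm z) < fps_conv_radius (fps_poly_at t (gkp_egf g0 gi))"
    using t by (auto intro: less_le_trans[OF _ fps_conv_radius_trig_fps]
        less_le_trans[of "ereal (norm z)" "ereal (1 / K)"] simp del: divide_self_if)
qed

lemma eval_gkp_egf_eq_powr:
  fixes g0 gi t z :: complex
  assumes t: "cmod t \<le> 1" and z: "cmod z < 1 / (4 * (cmod g0 + cmod gi + 4))"
  shows "eval_fps (fps_poly_at t (gkp_egf g0 gi)) z
           = (eval_fps (fps_poly_at t (trig_fps 1)) z ^ 2) powr g0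
             * (eval_fps (fps_poly_at t (trig_fps 0)) z ^ 2) powr (- g0 - gi)"
proof -
  define A B P where "A = fps_poly_at t (trig_fps 1)" and "B = fps_poly_at t (trig_fps 0)"
    and "P = fps_poly_at t (gkp_egf g0 gi)"
  define \<rho> where "\<rho> = 1 / (4 * (cmod g0 + cmod gi + 4))"
  show ?thesis
    unfolding A_def[symmetric] B_def[symmetric] P_def[symmetric]
  proof (rule ode_solution_eq_powr[where \<rho> = \<rho> and a = "eval_fps A"
      and b = "eval_fps B" and h = "eval_fps P"])
    fix w :: complex
    assume w: "w \<in> ball 0 \<rho>"
    then have "norm w < 1 / (4 * (cmod g0 + cmod gi + 4))"
      by (simp add: \<rho>_def)
    note radii = norm_less_fps_conv_radius_gkp[OF t this, folded A_def B_def P_def]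
    show "(eval_fps A has_field_derivative eval_fps (fps_deriv A) w) (at w)"
      "(eval_fps B has_field_derivative eval_fps (fps_deriv B) w) (at w)"
      "(eval_fps P has_field_derivative eval_fps (fps_deriv P) w) (at w)"
      using radii by (auto intro: has_field_derivative_eval_fps)
    show "eval_fps A w * eval_fps B w * eval_fps (fps_deriv P) w =
        (2 * g0 * eval_fps (fps_deriv A) w * eval_fps B w
         + 2 * (- g0 - gi) * eval_fps A w * eval_fps (fps_deriv B) w) * eval_fps P w"
      using eval_fps_ode[OF fps_poly_at_gkp_egf_ode[of t g0 gi, folded A_def B_def P_def]] radii
      by simp
    have "norm w < 1 / 4"
      using less_inverse_four_mult(1)[of "cmod g0 + cmod gi + 4" "norm w"] w by (simp add: \<rho>_def)
    then show "Re (eval_fps A w) > 0" "Re (eval_fps B w) > 0"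
      unfolding A_def B_def using t by (auto intro: Re_eval_fps_trig_fps_pos)
  qed (use z in \<open>simp_all add: \<rho>_def A_def B_def P_def eval_fps_at_0 fps_nth_gkp_egf\<close>)
qed

lemma has_sum_gkp_triangle:
  fixes g0 gi t z :: complex
  assumes t: "cmod t \<le> 1" and z: "cmod z < 1 / (4 * (cmod g0 + cmod gi + 4))"
  shows "((\<lambda>(n, k). gkp (- 1/2) 1 g0 1 (- 1) gi n k * t ^ k * z ^ n / of_nat (fact n)) has_sum
           (eval_fps (fps_poly_at t (trig_fps 1)) z ^ 2) powr g0
             * (eval_fps (fps_poly_at t (trig_fps 0)) z ^ 2) powr (- g0 - gi)) UNIV"
proof -
  have "(\<lambda>(n, k). gkp (- 1/2) 1 g0 1 (- 1) gi n k * t ^ k * z ^ n / of_nat (fact n))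
      = (\<lambda>(n, k). coeff (fps_nth (gkp_egf g0 gi) n) k * t ^ k * z ^ n)"
    by (auto simp: fps_nth_gkp_egf coeff_gkp_row field_simps)
  moreover have "((\<lambda>(n, k). coeff (fps_nth (gkp_egf g0 gi) n) k * t ^ k * z ^ n) has_sum
      eval_fps (fps_poly_at t (gkp_egf g0 gi)) z) UNIV"
    using coeff_norm_gkp_egf[of g0 gi] less_inverse_four_mult(2)[OF _ z]
    by (intro has_sum_fps_poly_at[where C = 1, OF _ _ t]) auto
  ultimately show ?thesis
    using eval_gkp_egf_eq_powr[OF t z] by simp
qed

lemma s_plus_add_s_minus: "s_plus t z + s_minus t z = 1"
proof -
  define u v c s where "u = csqrt t" and "v = csqrt (1 - t)"
    and "c = cos (gkp_w t z)" and "s = sin (gkp_w t z)"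
  have "s_plus t z + s_minus t z = (u ^ 2 + v ^ 2) * (s ^ 2 + c ^ 2)"
    unfolding s_plus_def s_minus_def u_def[symmetric] v_def[symmetric] c_def[symmetric] s_def[symmetric]
    by (simp add: power2_eq_square algebra_simps)
  then show ?thesis
    by (simp add: u_def v_def s_def c_def sin_cos_squared_add)
qed

theorem mainTheorem6:
  fixes g0 ginf :: complex
  defines "g1 \<equiv> - g0 - ginf"
  defines "T \<equiv> gkp (- 1/2) 1 g0 1 (- 1) ginf"
  shows "(\<forall>t z. s_plus t z + s_minus t z = 1)
    \<and> (\<exists>Qp Qm.
         analytic2_at Qp 0 0 \<and> analytic2_at Qm 0 0
       \<and> (\<forall>t z. t \<noteq> 0 \<longrightarrow> Qp t z = s_plus t z / t)
       \<and> (\<forall>t z. 1 - t \<noteq> 0 \<longrightarrow> Qm t z = s_minus t z / (1 - t))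
       \<and> (\<forall>t. Qp t 0 = 1 \<and> Qm t 0 = 1)
       \<and> (\<exists>r>0. \<forall>t z. cmod t < r \<and> cmod z < r \<longrightarrow>
            ((\<lambda>(n, k). T n k * t ^ k * z ^ n / of_nat (fact n)) has_sum
               (Qp t z powr g0 * Qm t z powr g1)) UNIV))"
proof -
  define Qp Qm where "Qp t z = eval_fps (fps_poly_at t (trig_fps 1)) z ^ 2"
    and "Qm t z = eval_fps (fps_poly_at t (trig_fps 0)) z ^ 2" for t z
  define r where "r = 1 / (4 * (cmod g0 + cmod ginf + 4))"
  have "analytic2_at Qp 0 0" "analytic2_at Qm 0 0"
    unfolding Qp_def[abs_def] Qm_def[abs_def]
    by (rule analytic2_at_eval_fps_poly_at_power2[where C = 3], simp add: coeff_norm_trig_coeff)+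
  moreover have "\<forall>t z. t \<noteq> 0 \<longrightarrow> Qp t z = s_plus t z / t"
    "\<forall>t z. 1 - t \<noteq> 0 \<longrightarrow> Qm t z = s_minus t z / (1 - t)"
    by (simp_all add: Qp_def Qm_def eval_fps_trig_fps_1_power2 eval_fps_trig_fps_0_power2)
  moreover have "\<forall>t. Qp t 0 = 1 \<and> Qm t 0 = 1"
    by (simp add: Qp_def Qm_def eval_fps_at_0)
  moreover have "\<forall>t z. cmod t < r \<and> cmod z < r \<longrightarrow>
      ((\<lambda>(n, k). T n k * t ^ k * z ^ n / of_nat (fact n)) has_sum (Qp t z powr g0 * Qm t z powr g1)) UNIV"
  proof (intro allI impI)
    fix t z :: complex
    assume tz: "cmod t < r \<and> cmod z < r"
    then have "cmod t \<le> 1"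
      using less_inverse_four_mult(1)[of "cmod g0 + cmod ginf + 4" "cmod t"] by (simp add: r_def)
    then show "((\<lambda>(n, k). T n k * t ^ k * z ^ n / of_nat (fact n)) has_sum
        (Qp t z powr g0 * Qm t z powr g1)) UNIV"
      using has_sum_gkp_triangle[of t z g0 ginf] tz by (simp add: T_def g1_def Qp_def Qm_def r_def)
  qed
  moreover have "r > 0"
    by (simp add: r_def add_nonneg_pos)
  ultimately show ?thesis
    using s_plus_add_s_minus by blast
qed

end
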